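(* Let $\tau=x+iy$ with $y>0$, and let $u,v\in\mathbb{R}$ be not both integers. For $s\in[1,2]$ and $p>w>0$ set $$h(w,s)=\sum_{\substack{(m,n)\in\mathbb{Z}^2\\ w<|m\tau+n|^2<p}}\frac{e^{2\pi i(mu+nv)}}{|m\tau+n|^{2s}}.$$ Then $h(w,s)=O(w^{1/2-s})$ uniformly for $s\in[1,2]$, with implied constant independent of $w$, $s$ and $p$. *)

theory Defs
  imports Complex_Main
begin

definition lattice_sum :: "complex \<Rightarrow> real \<Rightarrow> real \<Rightarrow> real \<Rightarrow> real \<Rightarrow> real \<Rightarrow> complex" where
  "lattice_sum \<tau> u v p w s =
     (\<Sum>(m,n)\<in>{(m::int, n::int). w < (cmod (of_int m * \<tau> + of_int n))\<^sup>2 \<and>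
                                 (cmod (of_int m * \<tau> + of_int n))\<^sup>2 < p}.
        exp (2 * of_real pi * \<i> * of_real (of_int m * u + of_int n * v))
        / of_real ((cmod (of_int m * \<tau> + of_int n)) powr (2 * s)))"

end

theory Submission
  imports Defs "HOL-Analysis.Complex_Transcendental"
begin

text \<open>
  Write \<open>|m\<tau> + n|\<^sup>2 = Q(m,n)\<close> for the positive definite form
  \<open>Q(m,n) = |\<tau>|\<^sup>2 m\<^sup>2 + 2 Re(\<tau>) m n + n\<^sup>2\<close>. Exchanging the roles of \<open>m\<close> and \<open>n\<close> we
  may assume \<open>v \<notin> \<int>\<close>, so the partial sums of \<open>exp(2\<pi>inv)\<close> are bounded by a constant \<open>K\<close>.
  In a fixed row \<open>m\<close>, on either side of the vertex of \<open>n \<mapsto> Q(m,n)\<close> the admissible \<open>n\<close>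
  form an interval on which \<open>Q(m,n) powr -s\<close> is monotone, so Abel summation bounds the
  row sum by \<open>2K\<close> times the largest term, which is at most \<open>2 W powr (1-s) / (W + d m\<^sup>2)\<close>;
  here \<open>d\<close> bounds \<open>Q\<close> below on nonzero lattice points and \<open>W = max w d\<close>. Summing over
  \<open>m\<close> costs a factor \<open>O(W powr -1/2)\<close>. The bound holds for every \<open>s \<ge> 1\<close>.
\<close>

section \<open>Additive characters\<close>

definition add_char :: "real \<Rightarrow> int \<Rightarrow> complex" where
  "add_char v n = exp (2 * of_real pi * \<i> * of_real (of_int n * v))"

lemma add_char_add: "add_char v (a + b) = add_char v a * add_char v b"
  unfolding add_char_def by (simp add: exp_add[symmetric] algebra_simps)

lemma norm_add_char [simp]: "norm (add_char v n) = 1"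
  unfolding add_char_def by (simp add: norm_exp)

lemma add_char_one_neq_1:
  assumes "v \<notin> \<int>"
  shows "add_char v 1 \<noteq> 1"
proof
  assume "add_char v 1 = 1"
  then obtain k :: int where "2 * pi * v = of_int (2 * k) * pi"
    unfolding add_char_def exp_eq_1 by auto
  then have "v = of_int k" by simp
  with assms show False by simp
qed

lemma add_char_sum_telescope:
  "(add_char v 1 - 1) * (\<Sum>n\<in>{a..<a + int k}. add_char v n) = add_char v (a + int k) - add_char v a"
proof (induction k)
  case (Suc k)
  have "{a..<a + int (Suc k)} = insert (a + int k) {a..<a + int k}" by auto
  then have "(add_char v 1 - 1) * (\<Sum>n\<in>{a..<a + int (Suc k)}. add_char v n)
      = (add_char v 1 - 1) * add_char v (a + int k) + (add_char v (a + int k) - add_char v a)"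
    using Suc by (simp add: distrib_left)
  also have "\<dots> = add_char v (a + int (Suc k)) - add_char v a"
    using add_char_add[of v "a + int k" 1] by (simp add: algebra_simps)
  finally show ?case .
qed simp

lemma norm_sum_add_char_le:
  assumes "v \<notin> \<int>"
  shows "norm (\<Sum>n\<in>{a..b}. add_char v n) \<le> 2 / norm (add_char v 1 - 1)"
proof (cases "a \<le> b")
  case True
  define k where "k = nat (b - a + 1)"
  have ab: "{a..b} = {a..<a + int k}" using True unfolding k_def by auto
  have "norm (add_char v 1 - 1) * norm (\<Sum>n\<in>{a..b}. add_char v n)
      = norm (add_char v (a + int k) - add_char v a)"
    unfolding ab add_char_sum_telescope[symmetric] norm_mult ..
  also have "\<dots> \<le> 2"
    using norm_triangle_ineq4[of "add_char v (a + int k)" "add_char v a"] by simp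
  finally show ?thesis
    using add_char_one_neq_1[OF assms] by (simp add: field_simps mult.commute)
qed simp

section \<open>Abel summation over order-convex sets of integers\<close>

definition order_convex :: "'a::order set \<Rightarrow> bool" where
  "order_convex S \<longleftrightarrow> (\<forall>x\<in>S. \<forall>z\<in>S. {x..z} \<subseteq> S)"

lemma order_convexD: "order_convex S \<Longrightarrow> x \<in> S \<Longrightarrow> z \<in> S \<Longrightarrow> x \<le> y \<Longrightarrow> y \<le> z \<Longrightarrow> y \<in> S"
  unfolding order_convex_def by (meson atLeastAtMost_iff subsetD)

lemma order_convex_greaterThanLessThan: "order_convex {a<..<b}"
  unfolding order_convex_def
  by (meson atLeastAtMost_iff greaterThanLessThan_iff le_less_trans less_le_trans subsetI)

lemma order_convex_uminus:
  fixes S :: "'a::ordered_ab_group_add set"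
  assumes "order_convex S"
  shows "order_convex (uminus ` S)"
  unfolding order_convex_def
proof (intro ballI subsetI)
  fix x z y assume "x \<in> uminus ` S" "z \<in> uminus ` S" "y \<in> {x..z}"
  then have "- y \<in> S"
    using order_convexD[OF assms, of "- z" "- x" "- y"] by auto
  then show "y \<in> uminus ` S"
    by (rule rev_image_eqI) simp
qed

lemma order_convex_preimage:
  assumes "order_convex I" and "order_convex J" and "mono_on I \<phi> \<or> antimono_on I \<phi>"
  shows "order_convex {n \<in> I. \<phi> n \<in> J}"
  unfolding order_convex_def
proof (intro ballI subsetI)
  fix x z y assume x: "x \<in> {n \<in> I. \<phi> n \<in> J}" and z: "z \<in> {n \<in> I. \<phi> n \<in> J}" and "y \<in> {x..z}"
  then have "y \<in> I"
    using order_convexD[OF assms(1)] by auto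
  moreover have "\<phi> y \<in> J"
    using assms(3)
  proof
    assume "mono_on I \<phi>"
    then have "\<phi> x \<le> \<phi> y" "\<phi> y \<le> \<phi> z"
      using x z \<open>y \<in> I\<close> \<open>y \<in> {x..z}\<close> by (auto dest: monotone_onD)
    then show ?thesis
      using order_convexD[OF assms(2)] x z by blast
  next
    assume "antimono_on I \<phi>"
    then have "\<phi> z \<le> \<phi> y" "\<phi> y \<le> \<phi> x"
      using x z \<open>y \<in> I\<close> \<open>y \<in> {x..z}\<close> by (auto dest: monotone_onD)
    then show ?thesis
      using order_convexD[OF assms(2)] x z by blast
  qed
  ultimately show "y \<in> {n \<in> I. \<phi> n \<in> J}"
    by simp
qed

lemma finite_order_convex_eq_atLeastAtMost:
  fixes S :: "'a::linorder set"
  assumes "finite S" and "S \<noteq> {}" and "order_convex S"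
  shows "S = {Min S..Max S}"
proof
  show "S \<subseteq> {Min S..Max S}"
    using \<open>finite S\<close> by auto
  show "{Min S..Max S} \<subseteq> S"
    using \<open>order_convex S\<close> Min_in[OF assms(1,2)] Max_in[OF assms(1,2)]
    unfolding order_convex_def by blast
qed

lemma abel_bound_antitone_interval:
  fixes e :: "int \<Rightarrow> 'a::real_normed_vector"
  assumes partial: "\<And>a b. norm (\<Sum>n\<in>{a..b}. e n) \<le> K"
    and "a \<le> b" and "antimono_on {a..b} f" and "\<And>n. n \<in> {a..b} \<Longrightarrow> 0 \<le> f n"
  shows "norm (\<Sum>n\<in>{a..b}. f n *\<^sub>R e n) \<le> K * f a"
  using assms(2-)
proof (induction b arbitrary: f rule: int_ge_induct)
  case base
  have "f a * norm (e a) \<le> f a * K" using base partial[of a a] by (simp add: mult_left_mono)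
  then show ?case using base by (simp add: mult.commute)
next
  case (step b)
  define g where "g n = f n - f (b + 1)" for n
  have "antimono_on {a..b} g" "\<And>n. n \<in> {a..b} \<Longrightarrow> 0 \<le> g n"
    using step.prems step.hyps unfolding g_def monotone_on_def by auto
  then have IH: "norm (\<Sum>n\<in>{a..b}. g n *\<^sub>R e n) \<le> K * g a"
    using step.IH by blast
  have split: "{a..b + 1} = insert (b + 1) {a..b}" using step.hyps by auto
  have "(\<Sum>n\<in>{a..b + 1}. f n *\<^sub>R e n)
      = (\<Sum>n\<in>{a..b + 1}. g n *\<^sub>R e n) + f (b + 1) *\<^sub>R (\<Sum>n\<in>{a..b + 1}. e n)"
    unfolding g_def by (simp add: scaleR_diff_left sum_subtractf scaleR_sum_right)
  also have "(\<Sum>n\<in>{a..b + 1}. g n *\<^sub>R e n) = (\<Sum>n\<in>{a..b}. g n *\<^sub>R e n)"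
    unfolding split by (simp add: g_def)
  finally have "norm (\<Sum>n\<in>{a..b + 1}. f n *\<^sub>R e n)
      \<le> norm (\<Sum>n\<in>{a..b}. g n *\<^sub>R e n) + norm (f (b + 1) *\<^sub>R (\<Sum>n\<in>{a..b + 1}. e n))"
    by (simp only: norm_triangle_ineq)
  also have "\<dots> \<le> K * g a + f (b + 1) * K"
  proof (rule add_mono[OF IH])
    show "norm (f (b + 1) *\<^sub>R (\<Sum>n\<in>{a..b + 1}. e n)) \<le> f (b + 1) * K"
      using mult_left_mono[OF partial[of a "b + 1"], of "f (b + 1)"] step.prems(2)[of "b + 1"] step.hyps
      by simp
  qed
  finally show ?case
    unfolding g_def by (simp add: algebra_simps)
qed

lemma abel_bound_antitone:
  fixes e :: "int \<Rightarrow> 'a::real_normed_vector" and S :: "int set"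
  assumes partial: "\<And>a b. norm (\<Sum>n\<in>{a..b}. e n) \<le> K" and "0 \<le> K" and "0 \<le> B"
    and "finite S" and "order_convex S"
    and "antimono_on S f" and bounds: "\<And>n. n \<in> S \<Longrightarrow> 0 \<le> f n \<and> f n \<le> B"
  shows "norm (\<Sum>n\<in>S. f n *\<^sub>R e n) \<le> K * B"
proof (cases "S = {}")
  case False
  obtain a b where S: "S = {a..b}" and "a \<le> b"
    using finite_order_convex_eq_atLeastAtMost[OF \<open>finite S\<close> False \<open>order_convex S\<close>] False by fastforce
  have "norm (\<Sum>n\<in>S. f n *\<^sub>R e n) \<le> K * f a"
    unfolding S by (rule abel_bound_antitone_interval[OF partial \<open>a \<le> b\<close>])
      (use \<open>antimono_on S f\<close> bounds S in auto)
  also have "\<dots> \<le> K * B"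
    using bounds[of a] S \<open>a \<le> b\<close> \<open>0 \<le> K\<close> by (simp add: mult_left_mono)
  finally show ?thesis .
qed (simp add: assms)

lemma abel_bound_monotone:
  fixes e :: "int \<Rightarrow> 'a::real_normed_vector" and S :: "int set"
  assumes partial: "\<And>a b. norm (\<Sum>n\<in>{a..b}. e n) \<le> K" and "0 \<le> K" and "0 \<le> B"
    and "finite S" and "order_convex S"
    and "mono_on S f" and bounds: "\<And>n. n \<in> S \<Longrightarrow> 0 \<le> f n \<and> f n \<le> B"
  shows "norm (\<Sum>n\<in>S. f n *\<^sub>R e n) \<le> K * B"
proof -
  have reflect: "sum h (uminus ` A) = (\<Sum>n\<in>A. h (- n))" for h :: "int \<Rightarrow> 'a" and A
    by (simp add: sum.reindex)
  have "norm (\<Sum>n\<in>uminus ` S. f (- n) *\<^sub>R e (- n)) \<le> K * B"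
  proof (rule abel_bound_antitone[OF _ assms(2,3) _ order_convex_uminus[OF \<open>order_convex S\<close>]])
    show "norm (\<Sum>n\<in>{a..b}. e (- n)) \<le> K" for a b
      using partial[of "- b" "- a"] reflect[of e "{a..b}"] by simp
    show "antimono_on (uminus ` S) (\<lambda>n. f (- n))"
      using \<open>mono_on S f\<close> unfolding monotone_on_def by force
  qed (use \<open>finite S\<close> bounds in auto)
  then show ?thesis
    using reflect[of "\<lambda>n. f (- n) *\<^sub>R e (- n)" S] by simp
qed

lemma norm_sum_monotone_preimage_le:
  fixes e :: "int \<Rightarrow> 'a::real_normed_vector" and \<phi> :: "int \<Rightarrow> real"
  assumes partial: "\<And>a b. norm (\<Sum>n\<in>{a..b}. e n) \<le> K" and "0 \<le> K" and "0 \<le> B"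
    and "finite {n \<in> I. \<phi> n \<in> J}" and "order_convex I" and "order_convex J"
    and "mono_on I \<phi> \<or> antimono_on I \<phi>" and "antimono_on J g"
    and bounds: "\<And>n. n \<in> I \<Longrightarrow> \<phi> n \<in> J \<Longrightarrow> 0 \<le> g (\<phi> n) \<and> g (\<phi> n) \<le> B"
  shows "norm (\<Sum>n\<in>{n \<in> I. \<phi> n \<in> J}. g (\<phi> n) *\<^sub>R e n) \<le> K * B"
  using assms(7)
proof
  assume "mono_on I \<phi>"
  then have "antimono_on {n \<in> I. \<phi> n \<in> J} (\<lambda>n. g (\<phi> n))"
    using \<open>antimono_on J g\<close> by (auto simp: monotone_on_def)
  then show ?thesis
    using abel_bound_antitone[OF partial \<open>0 \<le> K\<close> \<open>0 \<le> B\<close> assms(4) order_convex_preimage[OF assms(5-7)]]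
      bounds by blast
next
  assume "antimono_on I \<phi>"
  then have "mono_on {n \<in> I. \<phi> n \<in> J} (\<lambda>n. g (\<phi> n))"
    using \<open>antimono_on J g\<close> by (auto simp: monotone_on_def)
  then show ?thesis
    using abel_bound_monotone[OF partial \<open>0 \<le> K\<close> \<open>0 \<le> B\<close> assms(4) order_convex_preimage[OF assms(5-7)]]
      bounds by blast
qed

section \<open>Positive definite binary quadratic forms\<close>

definition binary_qf :: "real \<Rightarrow> real \<Rightarrow> real \<Rightarrow> int \<Rightarrow> int \<Rightarrow> real" where
  "binary_qf a b c m n = a * (of_int m)\<^sup>2 + 2 * b * of_int m * of_int n + c * (of_int n)\<^sup>2"

lemma binary_qf_swap: "binary_qf a b c m n = binary_qf c b a n m"
  unfolding binary_qf_def by (simp add: algebra_simps)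

lemma binary_qf_completed_square:
  "c * binary_qf a b c m n = (c * of_int n + b * of_int m)\<^sup>2 + (a * c - b\<^sup>2) * (of_int m)\<^sup>2"
  unfolding binary_qf_def by (simp add: power2_eq_square algebra_simps)

lemma binary_qf_ge_left:
  assumes "c > 0"
  shows "(a * c - b\<^sup>2) / c * (of_int m)\<^sup>2 \<le> binary_qf a b c m n"
proof -
  have "(a * c - b\<^sup>2) * (of_int m)\<^sup>2 \<le> c * binary_qf a b c m n"
    unfolding binary_qf_completed_square by simp
  then show ?thesis
    using assms by (simp add: divide_simps mult.commute)
qed

lemma binary_qf_positive_definite:
  assumes "a > 0" and "c > 0" and "b\<^sup>2 < a * c"
  obtains d where "d > 0"
    and "\<And>m n. d * (of_int m)\<^sup>2 \<le> binary_qf a b c m n"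
    and "\<And>m n. d * (of_int n)\<^sup>2 \<le> binary_qf a b c m n"
proof
  define d where "d = min ((a * c - b\<^sup>2) / c) ((a * c - b\<^sup>2) / a)"
  show "d > 0"
    using assms unfolding d_def by simp
  show "d * (of_int m)\<^sup>2 \<le> binary_qf a b c m n" for m n
  proof -
    have "d * (of_int m)\<^sup>2 \<le> (a * c - b\<^sup>2) / c * (of_int m)\<^sup>2"
      unfolding d_def by (rule mult_right_mono) simp_all
    also have "\<dots> \<le> binary_qf a b c m n"
      by (rule binary_qf_ge_left[OF \<open>c > 0\<close>])
    finally show ?thesis .
  qed
  show "d * (of_int n)\<^sup>2 \<le> binary_qf a b c m n" for m n
  proof -
    have "d * (of_int n)\<^sup>2 \<le> (c * a - b\<^sup>2) / a * (of_int n)\<^sup>2"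
      unfolding d_def by (rule mult_right_mono) (simp_all add: mult.commute)
    also have "\<dots> \<le> binary_qf a b c m n"
      unfolding binary_qf_swap[of a b c m n] by (rule binary_qf_ge_left[OF \<open>a > 0\<close>])
    finally show ?thesis .
  qed
qed

lemma binary_qf_diff_right:
  "binary_qf a b c m n' - binary_qf a b c m n
     = (of_int n' - of_int n) * ((c * of_int n + b * of_int m) + (c * of_int n' + b * of_int m))"
  unfolding binary_qf_def by (simp add: power2_eq_square algebra_simps)

lemma binary_qf_mono_on_right:
  assumes "c > 0"
  shows "mono_on {n. 0 \<le> c * of_int n + b * of_int m} (binary_qf a b c m)"
proof (rule monotone_onI)
  fix n n' assume "n \<in> {n. 0 \<le> c * of_int n + b * of_int m}" and "n \<le> n'"
  moreover have "c * of_int n \<le> c * of_int n'"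
    using assms \<open>n \<le> n'\<close> by simp
  ultimately have "0 \<le> (of_int n' - of_int n) * ((c * of_int n + b * of_int m) + (c * of_int n' + b * of_int m))"
    by simp
  then show "binary_qf a b c m n \<le> binary_qf a b c m n'"
    using binary_qf_diff_right[of a b c m n' n] by simp
qed

lemma binary_qf_antimono_on_right:
  assumes "c > 0"
  shows "antimono_on {n. c * of_int n + b * of_int m < 0} (binary_qf a b c m)"
proof (rule monotone_onI)
  fix n n' assume "n' \<in> {n. c * of_int n + b * of_int m < 0}" and "n \<le> n'"
  moreover have "c * of_int n \<le> c * of_int n'"
    using assms \<open>n \<le> n'\<close> by simp
  ultimately have "(of_int n' - of_int n) * ((c * of_int n + b * of_int m) + (c * of_int n' + b * of_int m)) \<le> 0"
    by (simp add: mult_nonneg_nonpos)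
  then show "binary_qf a b c m n' \<le> binary_qf a b c m n"
    using binary_qf_diff_right[of a b c m n' n] by simp
qed

lemma int_abs_le_square: "\<bar>k\<bar> \<le> (k::int)\<^sup>2"
proof (cases "k = 0")
  case False
  then have "\<bar>k\<bar> * 1 \<le> \<bar>k\<bar> * \<bar>k\<bar>"
    by (intro mult_left_mono) auto
  then show ?thesis
    by (simp add: power2_eq_square abs_mult_self_eq)
qed simp

lemma one_le_of_int_square:
  assumes "k \<noteq> 0"
  shows "1 \<le> (of_int k :: real)\<^sup>2"
proof -
  have "1 \<le> k\<^sup>2"
    using int_abs_le_square[of k] assms by linarith
  then show ?thesis
    by (simp only: of_int_power[symmetric] of_int_1_le_iff)
qed

lemma finite_sublevel_if_coercive:
  fixes Q :: "int \<Rightarrow> int \<Rightarrow> real"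
  assumes "d > 0" and "\<And>m n. d * (of_int m)\<^sup>2 \<le> Q m n" and "\<And>m n. d * (of_int n)\<^sup>2 \<le> Q m n"
  shows "finite {(m, n). Q m n < p}"
proof -
  define N where "N = nat \<lceil>p / d\<rceil>"
  have bound: "k \<in> {-int N..int N}" if "d * (of_int k)\<^sup>2 < p" for k :: int
  proof -
    have "of_int \<bar>k\<bar> \<le> (of_int k :: real)\<^sup>2"
      using int_abs_le_square[of k] by (simp only: of_int_power[symmetric] of_int_le_iff)
    also have "\<dots> \<le> p / d"
      using that \<open>d > 0\<close> by (simp add: field_simps)
    also have "\<dots> \<le> of_int \<lceil>p / d\<rceil>"
      by (fact le_of_int_ceiling)
    finally have "\<bar>k\<bar> \<le> \<lceil>p / d\<rceil>"
      by (simp only: of_int_le_iff)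
    moreover from this have "int N = \<lceil>p / d\<rceil>"
      unfolding N_def by linarith
    ultimately show ?thesis
      by (simp add: abs_le_iff)
  qed
  have "{(m, n). Q m n < p} \<subseteq> {-int N..int N} \<times> {-int N..int N}"
  proof
    fix x assume "x \<in> {(m, n). Q m n < p}"
    then obtain m n where x: "x = (m, n)" and "Q m n < p"
      by auto
    then have "m \<in> {-int N..int N}" "n \<in> {-int N..int N}"
      using bound assms(2,3) by (meson le_less_trans)+
    then show "x \<in> {-int N..int N} \<times> {-int N..int N}"
      unfolding x by simp
  qed
  then show ?thesis
    by (rule finite_subset) simp
qed

lemma binary_qf_ge_max:
  assumes "d > 0"
    and "\<And>m n. d * (of_int m)\<^sup>2 \<le> binary_qf a b c m n"
    and "\<And>m n. d * (of_int n)\<^sup>2 \<le> binary_qf a b c m n"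
    and "0 \<le> w" and "w < binary_qf a b c m n"
  shows "max w d \<le> binary_qf a b c m n"
proof -
  have "m \<noteq> 0 \<or> n \<noteq> 0"
    using assms(4,5) by (auto simp: binary_qf_def)
  then have "1 \<le> (of_int m :: real)\<^sup>2 \<or> 1 \<le> (of_int n :: real)\<^sup>2"
    using one_le_of_int_square by blast
  then have "d * 1 \<le> binary_qf a b c m n"
    using assms(2,3) mult_left_mono[OF _ less_imp_le[OF \<open>d > 0\<close>]] by (meson order_trans)
  then show ?thesis
    using assms(5) by simp
qed

lemma norm_sum_row_le:
  fixes e :: "int \<Rightarrow> 'a::real_normed_vector" and a b c :: real and m :: int
  defines "Q \<equiv> binary_qf a b c m"
  assumes "c > 0" and partial: "\<And>a b. norm (\<Sum>n\<in>{a..b}. e n) \<le> K" and "0 \<le> K" and "0 \<le> B"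
    and finite: "finite {n. Q n \<in> J}" and "order_convex J" and "antimono_on J g"
    and bounds: "\<And>n. Q n \<in> J \<Longrightarrow> 0 \<le> g (Q n) \<and> g (Q n) \<le> B"
  shows "norm (\<Sum>n | Q n \<in> J. g (Q n) *\<^sub>R e n) \<le> 2 * K * B"
proof -
  have half: "norm (\<Sum>n\<in>{n \<in> I. Q n \<in> J}. g (Q n) *\<^sub>R e n) \<le> K * B"
    if "order_convex I" and "mono_on I Q \<or> antimono_on I Q" for I
  proof (rule norm_sum_monotone_preimage_le[OF partial \<open>0 \<le> K\<close> \<open>0 \<le> B\<close> _ that(1)
        \<open>order_convex J\<close> that(2) \<open>antimono_on J g\<close>])
    show "finite {n \<in> I. Q n \<in> J}"
      using finite by (rule rev_finite_subset) auto
  qed (use bounds in simp)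
  \<comment> \<open>the two sides of the vertex \<open>n = -b m / c\<close> of the parabola \<open>Q\<close>\<close>
  define Ip where "Ip = {n. 0 \<le> c * of_int n + b * of_int m}"
  define In where "In = {n. c * of_int n + b * of_int m < 0}"
  have c_mono: "c * of_int x \<le> c * of_int y" if "x \<le> y" for x y
    using \<open>c > 0\<close> that by simp
  have "order_convex Ip"
    unfolding order_convex_def Ip_def subset_eq
    using c_mono by (smt (verit) atLeastAtMost_iff mem_Collect_eq)
  moreover have "mono_on Ip Q"
    unfolding Ip_def Q_def by (rule binary_qf_mono_on_right[OF \<open>c > 0\<close>])
  moreover have "order_convex In"
    unfolding order_convex_def In_def subset_eq
    using c_mono by (smt (verit) atLeastAtMost_iff mem_Collect_eq)
  moreover have "antimono_on In Q"
    unfolding In_def Q_def by (rule binary_qf_antimono_on_right[OF \<open>c > 0\<close>])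
  ultimately have halves: "norm (\<Sum>n\<in>{n \<in> Ip. Q n \<in> J}. g (Q n) *\<^sub>R e n) \<le> K * B"
    "norm (\<Sum>n\<in>{n \<in> In. Q n \<in> J}. g (Q n) *\<^sub>R e n) \<le> K * B"
    using half by blast+
  have "(\<Sum>n | Q n \<in> J. g (Q n) *\<^sub>R e n)
      = (\<Sum>n\<in>{n \<in> Ip. Q n \<in> J}. g (Q n) *\<^sub>R e n) + (\<Sum>n\<in>{n \<in> In. Q n \<in> J}. g (Q n) *\<^sub>R e n)"
  proof -
    have split: "{n. Q n \<in> J} = {n \<in> Ip. Q n \<in> J} \<union> {n \<in> In. Q n \<in> J}"
      and disjoint: "{n \<in> Ip. Q n \<in> J} \<inter> {n \<in> In. Q n \<in> J} = {}"
      unfolding Ip_def In_def by auto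
    have "finite {n \<in> Ip. Q n \<in> J}" "finite {n \<in> In. Q n \<in> J}"
      using finite unfolding split by simp_all
    then show ?thesis
      unfolding split by (rule sum.union_disjoint[OF _ _ disjoint])
  qed
  then have "norm (\<Sum>n | Q n \<in> J. g (Q n) *\<^sub>R e n)
      \<le> norm (\<Sum>n\<in>{n \<in> Ip. Q n \<in> J}. g (Q n) *\<^sub>R e n) + norm (\<Sum>n\<in>{n \<in> In. Q n \<in> J}. g (Q n) *\<^sub>R e n)"
    by (simp only: norm_triangle_ineq)
  also have "\<dots> \<le> 2 * K * B"
    using halves by simp
  finally show ?thesis .
qed

lemma sum_inverse_sum_squares_le:
  fixes h :: real
  assumes "h > 0"
  shows "(\<Sum>m\<in>{-int N..int N}. 1 / (h\<^sup>2 + (of_int m)\<^sup>2)) \<le> 1 / h\<^sup>2 + 4 / h - 4 / (h + of_nat N)"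
proof (induction N)
  case (Suc N)
  define x where "x = real N + 1"
  have "{-int (Suc N)..int (Suc N)} = insert (int N + 1) (insert (- int N - 1) {-int N..int N})"
    by auto
  then have "(\<Sum>m\<in>{-int (Suc N)..int (Suc N)}. 1 / (h\<^sup>2 + (of_int m)\<^sup>2))
      = 2 / (h\<^sup>2 + x\<^sup>2) + (\<Sum>m\<in>{-int N..int N}. 1 / (h\<^sup>2 + (of_int m)\<^sup>2))"
    unfolding x_def by (simp add: power2_eq_square algebra_simps)
  moreover have "2 / (h\<^sup>2 + x\<^sup>2) \<le> 4 / (h + x - 1) - 4 / (h + x)"
  proof -
    have pos: "h + x - 1 > 0"
      using assms unfolding x_def by simp
    have "2 * (h\<^sup>2 + x\<^sup>2) - (h + x - 1) * (h + x) = (h - x)\<^sup>2 + (h + x)"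
      by (simp add: power2_eq_square algebra_simps)
    then have "(h + x - 1) * (h + x) \<le> 2 * (h\<^sup>2 + x\<^sup>2)"
      using assms pos by (smt (verit) zero_le_power2)
    then have "2 / (h\<^sup>2 + x\<^sup>2) \<le> 4 / ((h + x - 1) * (h + x))"
      using pos assms by (simp add: divide_simps) (smt (verit) power2_less_0)
    also have "\<dots> = 4 / (h + x - 1) - 4 / (h + x)"
      using pos assms by (simp add: divide_simps)
    finally show ?thesis .
  qed
  ultimately show ?case
    using Suc.IH unfolding x_def by (simp add: add.commute)
qed simp

lemma sum_inverse_shifted_square_le:
  fixes W D :: real and M :: "int set"
  assumes "D > 0" and "D \<le> W" and "finite M"
  shows "(\<Sum>m\<in>M. 1 / (W + D * (of_int m)\<^sup>2)) \<le> 5 / sqrt (D * W)"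
proof -
  define h where "h = sqrt (W / D)"
  have "h > 0" and W: "W = D * h\<^sup>2"
    using assms unfolding h_def by simp_all
  have Dh: "D * h = sqrt (D * W)"
    using assms unfolding h_def by (simp add: real_sqrt_divide real_sqrt_mult field_simps)
  define N where "N = nat (Max (insert 0 (abs ` M)))"
  have "M \<subseteq> {-int N..int N}"
  proof
    fix m assume "m \<in> M"
    then have "\<bar>m\<bar> \<le> Max (insert 0 (abs ` M))"
      using \<open>finite M\<close> by simp
    then show "m \<in> {-int N..int N}"
      unfolding N_def by auto
  qed
  then have "(\<Sum>m\<in>M. 1 / (W + D * (of_int m)\<^sup>2)) \<le> (\<Sum>m\<in>{-int N..int N}. 1 / (W + D * (of_int m)\<^sup>2))"
    using assms by (intro sum_mono2) (simp_all add: add_pos_nonneg)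
  also have "\<dots> = (\<Sum>m\<in>{-int N..int N}. 1 / (h\<^sup>2 + (of_int m)\<^sup>2)) / D"
    unfolding W sum_divide_distrib by (simp add: distrib_left[symmetric] mult.commute)
  also have "\<dots> \<le> (1 / h\<^sup>2 + 4 / h) / D"
  proof (rule divide_right_mono)
    have "0 \<le> 4 / (h + of_nat N)"
      using \<open>h > 0\<close> by simp
    then show "(\<Sum>m\<in>{-int N..int N}. 1 / (h\<^sup>2 + (of_int m)\<^sup>2)) \<le> 1 / h\<^sup>2 + 4 / h"
      using sum_inverse_sum_squares_le[OF \<open>h > 0\<close>, of N] by linarith
  qed (use \<open>D > 0\<close> in simp)
  also have "\<dots> = 1 / W + 4 / (D * h)"
    using \<open>D > 0\<close> \<open>h > 0\<close> by (simp add: W field_simps power2_eq_square)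
  also have "\<dots> = 1 / W + 4 / sqrt (D * W)"
    by (simp only: Dh)
  also have "\<dots> \<le> 5 / sqrt (D * W)"
  proof -
    have "sqrt (D * W) \<le> sqrt (W * W)"
      using assms by (intro real_sqrt_le_mono mult_right_mono) simp_all
    then have "1 / W \<le> 1 / sqrt (D * W)"
      using assms by (simp add: frac_le)
    then show ?thesis
      by simp
  qed
  finally show ?thesis .
qed

lemma inverse_powr_le:
  fixes Q W t s :: real
  assumes "0 < W" and "W \<le> Q" and "0 \<le> t" and "t \<le> Q" and "1 \<le> s"
  shows "1 / Q powr s \<le> 2 * W powr (1 - s) / (W + t)"
proof -
  have "Q > 0"
    using assms by simp
  have "(W + t) / 2 * W powr (s - 1) \<le> Q * Q powr (s - 1)"
    using assms by (intro mult_mono powr_mono2) simp_all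
  also have "\<dots> = Q powr s"
    using \<open>Q > 0\<close> by (simp add: powr_diff)
  finally have "1 / Q powr s \<le> 1 / ((W + t) / 2 * W powr (s - 1))"
    using assms by (intro divide_left_mono) simp_all
  also have "\<dots> = 2 * W powr (1 - s) / (W + t)"
    using assms by (simp add: powr_diff powr_minus divide_simps)
  finally show ?thesis .
qed

section \<open>Twisted sums over shells of a quadratic form\<close>

definition twisted_form_sum ::
    "real \<Rightarrow> real \<Rightarrow> real \<Rightarrow> real \<Rightarrow> real \<Rightarrow> real \<Rightarrow> real \<Rightarrow> real \<Rightarrow> complex" where
  "twisted_form_sum a b c u v p w s =
     (\<Sum>(m, n)\<in>{(m, n). w < binary_qf a b c m n \<and> binary_qf a b c m n < p}.
        add_char u m * add_char v n / of_real (binary_qf a b c m n powr s))"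

lemma norm_sum_twisted_row_le:
  assumes "c > 0" and "d > 0"
    and lower: "\<And>m n. d * (of_int m)\<^sup>2 \<le> binary_qf a b c m n"
      "\<And>m n. d * (of_int n)\<^sup>2 \<le> binary_qf a b c m n"
    and partial: "\<And>\<alpha> \<beta>. norm (\<Sum>n\<in>{\<alpha>..\<beta>}. add_char v n) \<le> K" and "0 \<le> K"
    and "1 \<le> s" and "0 < w"
    and finite: "finite {n. w < binary_qf a b c m n \<and> binary_qf a b c m n < p}"
  shows "norm (\<Sum>n | w < binary_qf a b c m n \<and> binary_qf a b c m n < p.
            add_char v n / of_real (binary_qf a b c m n powr s))
         \<le> 4 * K * (max w d powr (1 - s) / (max w d + d * (of_int m)\<^sup>2))"
proof -
  let ?Q = "binary_qf a b c m"
  define W where "W = max w d"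
  define B where "B = 2 * W powr (1 - s) / (W + d * (of_int m)\<^sup>2)"
  have "W > 0"
    using \<open>0 < w\<close> unfolding W_def by auto
  have "(\<Sum>n | w < ?Q n \<and> ?Q n < p. add_char v n / of_real (?Q n powr s))
      = (\<Sum>n | ?Q n \<in> {w<..<p}. (1 / ?Q n powr s) *\<^sub>R add_char v n)"
    by (simp add: scaleR_conv_of_real divide_inverse mult.commute)
  also have "norm \<dots> \<le> 2 * K * B"
  proof (rule norm_sum_row_le[OF \<open>c > 0\<close> partial \<open>0 \<le> K\<close> _ _ order_convex_greaterThanLessThan])
    show "0 \<le> B"
      using \<open>W > 0\<close> \<open>d > 0\<close> unfolding B_def by simp
    show "finite {n. ?Q n \<in> {w<..<p}}"
      using finite by simp
    show "antimono_on {w<..<p} (\<lambda>x. 1 / x powr s)"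
      using \<open>0 < w\<close> \<open>1 \<le> s\<close> by (auto simp: monotone_on_def intro!: divide_left_mono powr_mono2)
    fix n assume "?Q n \<in> {w<..<p}"
    then have "W \<le> ?Q n"
      unfolding W_def using \<open>0 < w\<close> by (intro binary_qf_ge_max[OF \<open>d > 0\<close> lower]) simp_all
    then show "0 \<le> 1 / ?Q n powr s \<and> 1 / ?Q n powr s \<le> B"
      unfolding B_def using inverse_powr_le \<open>W > 0\<close> \<open>d > 0\<close> lower \<open>1 \<le> s\<close> by simp
  qed
  finally show ?thesis
    unfolding B_def W_def by simp
qed

lemma norm_twisted_form_sum_le:
  assumes "c > 0" and "d > 0"
    and lower: "\<And>m n. d * (of_int m)\<^sup>2 \<le> binary_qf a b c m n"
      "\<And>m n. d * (of_int n)\<^sup>2 \<le> binary_qf a b c m n"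
    and partial: "\<And>\<alpha> \<beta>. norm (\<Sum>n\<in>{\<alpha>..\<beta>}. add_char v n) \<le> K" and "0 \<le> K"
    and "1 \<le> s" and "0 < w"
  shows "norm (twisted_form_sum a b c u v p w s) \<le> 20 * K / sqrt d * max w d powr (1/2 - s)"
proof -
  let ?Q = "binary_qf a b c"
  define W where "W = max w d"
  define S where "S = {(m, n). w < ?Q m n \<and> ?Q m n < p}"
  define row where "row m = {n. w < ?Q m n \<and> ?Q m n < p}" for m
  have "W > 0" "d \<le> W"
    using \<open>0 < w\<close> unfolding W_def by auto
  have "finite S"
    using finite_sublevel_if_coercive[OF \<open>d > 0\<close> lower, of p]
    by (rule finite_subset[rotated]) (auto simp: S_def)
  have S: "S = Sigma (fst ` S) row"
    unfolding S_def row_def by force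
  have finite_row: "finite (row m)" for m
    using finite_vimageI[OF \<open>finite S\<close>, of "Pair m"]
    unfolding S_def row_def by (simp add: vimage_def inj_on_def)
  have "norm (twisted_form_sum a b c u v p w s)
      = norm (\<Sum>m\<in>fst ` S. add_char u m * (\<Sum>n\<in>row m. add_char v n / of_real (?Q m n powr s)))"
    unfolding twisted_form_sum_def S_def[symmetric]
    by (subst S, subst sum.Sigma[symmetric]) (simp_all add: \<open>finite S\<close> finite_row sum_distrib_left)
  also have "\<dots> \<le> (\<Sum>m\<in>fst ` S. 4 * K * (W powr (1 - s) / (W + d * (of_int m)\<^sup>2)))"
    using norm_sum_twisted_row_le[OF assms finite_row[unfolded row_def]]
    unfolding row_def W_def by (intro sum_norm_le) (simp add: norm_mult)
  also have "\<dots> = 4 * K * W powr (1 - s) * (\<Sum>m\<in>fst ` S. 1 / (W + d * (of_int m)\<^sup>2))"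
    by (simp add: sum_distrib_left)
  also have "\<dots> \<le> 4 * K * W powr (1 - s) * (5 / sqrt (d * W))"
    using sum_inverse_shifted_square_le[OF \<open>d > 0\<close> \<open>d \<le> W\<close>] \<open>finite S\<close> \<open>0 \<le> K\<close>
    by (intro mult_left_mono) simp_all
  also have "\<dots> = 20 * K / sqrt d * (W powr (1 - s) / W powr (1/2))"
    using \<open>W > 0\<close> \<open>d > 0\<close> by (simp add: real_sqrt_mult powr_half_sqrt)
  also have "W powr (1 - s) / W powr (1/2) = W powr (1/2 - s)"
    by (simp add: powr_diff[symmetric])
  finally show ?thesis
    unfolding W_def .
qed

lemma twisted_form_sum_bound_right:
  assumes "a > 0" and "c > 0" and "b\<^sup>2 < a * c" and "v \<notin> \<int>"
  obtains C where "\<And>s p w. 1 \<le> s \<Longrightarrow> 0 < w \<Longrightarrow>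
    norm (twisted_form_sum a b c u v p w s) \<le> C * w powr (1/2 - s)"
proof -
  obtain d where "d > 0"
    and lower: "\<And>m n. d * (of_int m)\<^sup>2 \<le> binary_qf a b c m n"
      "\<And>m n. d * (of_int n)\<^sup>2 \<le> binary_qf a b c m n"
    using binary_qf_positive_definite[OF assms(1-3)] by blast
  define K where "K = 2 / norm (add_char v 1 - 1)"
  have partial: "norm (\<Sum>n\<in>{\<alpha>..\<beta>}. add_char v n) \<le> K" for \<alpha> \<beta>
    unfolding K_def by (rule norm_sum_add_char_le[OF \<open>v \<notin> \<int>\<close>])
  have "K \<ge> 0"
    unfolding K_def by simp
  show ?thesis
  proof
    fix s p w :: real assume "1 \<le> s" "0 < w"
    have "norm (twisted_form_sum a b c u v p w s) \<le> 20 * K / sqrt d * max w d powr (1/2 - s)"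
      by (rule norm_twisted_form_sum_le[OF \<open>c > 0\<close> \<open>d > 0\<close> lower partial \<open>K \<ge> 0\<close> \<open>1 \<le> s\<close> \<open>0 < w\<close>])
    also have "\<dots> \<le> 20 * K / sqrt d * w powr (1/2 - s)"
      using \<open>K \<ge> 0\<close> \<open>d > 0\<close> \<open>1 \<le> s\<close> \<open>0 < w\<close> by (intro mult_left_mono powr_mono2') simp_all
    finally show "norm (twisted_form_sum a b c u v p w s) \<le> 20 * K / sqrt d * w powr (1/2 - s)" .
  qed
qed

lemma twisted_form_sum_swap: "twisted_form_sum a b c u v p w s = twisted_form_sum c b a v u p w s"
  unfolding twisted_form_sum_def
  by (rule sum.reindex_bij_witness[of _ prod.swap prod.swap])
    (auto simp: binary_qf_swap[of c b a] mult.commute)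

lemma twisted_form_sum_bound:
  assumes "a > 0" and "c > 0" and "b\<^sup>2 < a * c" and "\<not> (u \<in> \<int> \<and> v \<in> \<int>)"
  obtains C where "\<And>s p w. 1 \<le> s \<Longrightarrow> 0 < w \<Longrightarrow>
    norm (twisted_form_sum a b c u v p w s) \<le> C * w powr (1/2 - s)"
proof (cases "v \<in> \<int>")
  case True
  then have "u \<notin> \<int>"
    using assms(4) by blast
  moreover have "b\<^sup>2 < c * a"
    using assms(3) by (simp add: mult.commute)
  ultimately show ?thesis
    using twisted_form_sum_bound_right[OF \<open>c > 0\<close> \<open>a > 0\<close>] that
    unfolding twisted_form_sum_swap[of a b c u v] by blast
next
  case False
  then show ?thesis
    using twisted_form_sum_bound_right[OF assms(1-3)] that by blast
qed

lemma lattice_sum_eq_twisted_form_sum: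
  "lattice_sum \<tau> u v p w s = twisted_form_sum ((cmod \<tau>)\<^sup>2) (Re \<tau>) 1 u v p w s"
proof -
  have norm_sq: "(cmod (of_int m * \<tau> + of_int n))\<^sup>2 = binary_qf ((cmod \<tau>)\<^sup>2) (Re \<tau>) 1 m n" for m n
    unfolding binary_qf_def cmod_power2 by (simp add: power2_eq_square algebra_simps)
  have powr_double: "r powr (2 * s) = (r\<^sup>2) powr s" if "r \<ge> 0" for r :: real
    using that by (cases "r = 0") (simp_all add: powr_powr[symmetric] powr_numeral)
  have character: "exp (2 * of_real pi * \<i> * of_real (of_int m * u + of_int n * v)) = add_char u m * add_char v n" for m n
    unfolding add_char_def by (simp add: exp_add[symmetric] algebra_simps)
  show ?thesis
    unfolding lattice_sum_def twisted_form_sum_def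
    by (simp only: norm_sq powr_double[OF norm_ge_zero] character)
qed

theorem mainTheorem9:
  fixes \<tau> :: complex and u v :: real
  assumes "Im \<tau> > 0"
    and "\<not> (u \<in> \<int> \<and> v \<in> \<int>)"
  shows "\<exists>C::real. \<forall>s p w. 1 \<le> s \<and> s \<le> 2 \<and> 0 < w \<and> w < p \<longrightarrow>
           cmod (lattice_sum \<tau> u v p w s) \<le> C * w powr (1/2 - s)"
proof -
  have "(cmod \<tau>)\<^sup>2 > 0" and "(Re \<tau>)\<^sup>2 < (cmod \<tau>)\<^sup>2 * 1"
    using assms(1) by (simp_all add: cmod_power2 add_nonneg_pos)
  then obtain C where "\<And>s p w. 1 \<le> s \<Longrightarrow> 0 < w \<Longrightarrow>
      norm (twisted_form_sum ((cmod \<tau>)\<^sup>2) (Re \<tau>) 1 u v p w s) \<le> C * w powr (1/2 - s)"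
    using twisted_form_sum_bound[OF _ zero_less_one _ assms(2)] by blast
  then show ?thesis
    unfolding lattice_sum_eq_twisted_form_sum by blast
qed

end
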